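(* Let $G$ be a connected graph on $n$ vertices and $m$ edges. If all the cycles of $G$ are pairwise vertex disjoint, then $G\in\mathcal{P}_n$.
   Context: Graphs are finite, simple and undirected. $\mathbb{T}=\{z\in\mathbb{C}:|z|=1\}$, $\mathbb{I}=[0,2\pi)$. A $\mathbb{T}$-gain on $G$ is a map $\varphi$ from oriented edges to $\mathbb{T}$ with $\varphi(\overrightarrow{e_{ts}})=\varphi(\overrightarrow{e_{st}})^{-1}$; $A(\Phi)$ for $\Phi=(G,\varphi)$ is the Hermitian matrix with $(s,t)$ entry $\varphi(\overrightarrow{e_{st}})$ if $v_s\sim v_t$, else $0$; $\mathcal{T}_G$ is the set of all $\mathbb{T}$-gain graphs on $G$. For a complex matrix $A=B+iC$ with $B,C$ real, $\Re(A)=B$, and $\Re(A)\ge0$ means all entries of $B$ are nonnegative. The gain of a directed cycle is the product of gains of its oriented edges. A rooted spanning tree $T$ with root $v_r$ induces the tree order ($v_x\le v_y$ iff $v_x$ is on the $T$-path from $v_r$ to $v_y$); $T$ is normal if adjacent vertices of $G$ are always comparable. The suitably oriented graph $\overrightarrow{G_T}$ orients each edge $e_{st}$ with $v_s\le v_t$ as $\overrightarrow{e_{st}}$ if $e_{st}\in E(T)$ and as $\overrightarrow{e_{ts}}$ otherwise; the $m-n+1$ fundamental cycles of $T$ become directed cycles $\overrightarrow{C_j(T)}$. For $r=(c_1,\dots,c_{m-n+1})\in\mathbb{I}^{m-n+1}$, $\mathcal{A}_T(r)=\{(G,\varphi)\in\mathcal{T}_G:\varphi(\overrightarrow{C_j(T)})=e^{ic_j}\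 \forall j\}$. A connected graph $G$ with normal spanning tree $T$ has property GNRP if for each $r\in\mathbb{I}^{m-n+1}$ there exists $\Phi\in\mathcal{A}_T(r)$ with $\Re(A(\Phi))\ge0$. $\mathcal{P}_n$ (or $\mathcal{P}$) is the collection of connected graphs on $n$ vertices with property GNRP. *)

theory Defs
  imports Complex_Main
begin

definition simple_graph :: "'a set \<Rightarrow> 'a set set \<Rightarrow> bool" where
  "simple_graph V E \<longleftrightarrow> finite V \<and>
     (\<forall>e\<in>E. \<exists>u v. u \<noteq> v \<and> u \<in> V \<and> v \<in> V \<and> e = {u, v})"

definition gpath :: "'a set set \<Rightarrow> 'a list \<Rightarrow> bool" where
  "gpath F xs \<longleftrightarrow> xs \<noteq> [] \<and> distinct xs \<and>
     (\<forall>i. Suc i < length xs \<longrightarrow> {xs ! i, xs ! Suc i} \<in> F)"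

definition connected_graph :: "'a set \<Rightarrow> 'a set set \<Rightarrow> bool" where
  "connected_graph V E \<longleftrightarrow> V \<noteq> {} \<and>
     (\<forall>u\<in>V. \<forall>v\<in>V. \<exists>xs. gpath E xs \<and> set xs \<subseteq> V \<and> hd xs = u \<and> last xs = v)"

definition is_cycle :: "'a set \<Rightarrow> 'a set set \<Rightarrow> 'a list \<Rightarrow> bool" where
  "is_cycle V F xs \<longleftrightarrow> length xs \<ge> 3 \<and> set xs \<subseteq> V \<and> gpath F xs \<and> {last xs, hd xs} \<in> F"

definition cycle_edges :: "'a list \<Rightarrow> 'a set set" where
  "cycle_edges xs = {{xs ! i, xs ! Suc i} | i. Suc i < length xs} \<union> {{last xs, hd xs}}"

definition cycles_vertex_disjoint :: "'a set \<Rightarrow> 'a set set \<Rightarrow> bool" where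
  "cycles_vertex_disjoint V E \<longleftrightarrow>
     (\<forall>xs ys. is_cycle V E xs \<and> is_cycle V E ys \<and> cycle_edges xs \<noteq> cycle_edges ys
        \<longrightarrow> set xs \<inter> set ys = {})"

definition rooted_spanning_tree :: "'a set \<Rightarrow> 'a set set \<Rightarrow> 'a set set \<Rightarrow> 'a \<Rightarrow> bool" where
  "rooted_spanning_tree V E T r \<longleftrightarrow> T \<subseteq> E \<and> r \<in> V \<and> connected_graph V T \<and>
     (\<nexists>xs. is_cycle V T xs)"

definition tree_le :: "'a set set \<Rightarrow> 'a \<Rightarrow> 'a \<Rightarrow> 'a \<Rightarrow> bool" where
  "tree_le T r x y \<longleftrightarrow> (\<exists>xs. gpath T xs \<and> hd xs = r \<and> last xs = y \<and> x \<in> set xs)"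

definition normal_spanning_tree :: "'a set \<Rightarrow> 'a set set \<Rightarrow> 'a set set \<Rightarrow> 'a \<Rightarrow> bool" where
  "normal_spanning_tree V E T r \<longleftrightarrow> rooted_spanning_tree V E T r \<and>
     (\<forall>s t. {s, t} \<in> E \<longrightarrow> tree_le T r s t \<or> tree_le T r t s)"

definition is_T_gain :: "'a set set \<Rightarrow> ('a \<Rightarrow> 'a \<Rightarrow> complex) \<Rightarrow> bool" where
  "is_T_gain E \<phi> \<longleftrightarrow> (\<forall>s t. {s, t} \<in> E \<longrightarrow> cmod (\<phi> s t) = 1 \<and> \<phi> t s = inverse (\<phi> s t))"

definition gain_adj :: "'a set set \<Rightarrow> ('a \<Rightarrow> 'a \<Rightarrow> complex) \<Rightarrow> 'a \<Rightarrow> 'a \<Rightarrow> complex" where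
  "gain_adj E \<phi> s t = (if {s, t} \<in> E then \<phi> s t else 0)"

text \<open>Gain of a directed closed walk given as the vertex list x0,...,xk,x0.\<close>
definition walk_gain :: "('a \<Rightarrow> 'a \<Rightarrow> complex) \<Rightarrow> 'a list \<Rightarrow> complex" where
  "walk_gain \<phi> ws = (\<Prod>i<length ws - 1. \<phi> (ws ! i) (ws ! Suc i))"

text \<open>The directed fundamental cycle of the non-tree edge e = {s,t}, s \<le> t, in the
  suitably oriented graph: the T-path s \<rightarrow> ... \<rightarrow> t (tree edges oriented downwards)
  followed by the oriented edge t \<rightarrow> s.\<close>
definition fund_dir_cycle :: "'a set set \<Rightarrow> 'a \<Rightarrow> 'a set \<Rightarrow> 'a list \<Rightarrow> bool" where
  "fund_dir_cycle T r e ws \<longleftrightarrow> (\<exists>s t xs. e = {s, t} \<and> tree_le T r s t \<and>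
      gpath T xs \<and> hd xs = s \<and> last xs = t \<and> ws = xs @ [s])"

text \<open>Property GNRP of G with respect to the normal spanning tree T rooted at r.
  The fundamental cycles are indexed by the non-tree edges E - T.\<close>
definition gnrp :: "'a set \<Rightarrow> 'a set set \<Rightarrow> 'a set set \<Rightarrow> 'a \<Rightarrow> bool" where
  "gnrp V E T r \<longleftrightarrow>
     (\<forall>c :: 'a set \<Rightarrow> real. (\<forall>e\<in>E - T. 0 \<le> c e \<and> c e < 2 * pi) \<longrightarrow>
        (\<exists>\<phi>. is_T_gain E \<phi> \<and>
             (\<forall>e\<in>E - T. \<forall>ws. fund_dir_cycle T r e ws \<longrightarrow>
                 walk_gain \<phi> ws = cis (c e)) \<and>
             (\<forall>s\<in>V. \<forall>t\<in>V. Re (gain_adj E \<phi> s t) \<ge> 0)))"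

definition in_P :: "nat \<Rightarrow> 'a set \<Rightarrow> 'a set set \<Rightarrow> bool" where
  "in_P n V E \<longleftrightarrow> simple_graph V E \<and> card V = n \<and> connected_graph V E \<and>
     (\<forall>T r. normal_spanning_tree V E T r \<longrightarrow> gnrp V E T r)"

end

(*
  For a non-tree edge e = {s, t} with s below t, the fundamental cycle is the tree path
  s = x_0, x_1, ..., x_k = t closed by the arc t -> s.  Pick h_e in [-pi/2, pi/2] with
  2 h_e = c_e modulo 2 pi and give the two arcs t -> s and s -> x_1 the gain e^(i h_e)
  (their reverses the conjugate), all other arcs the gain 1.  Every fundamental cycle then
  has gain e^(2 i h_e) = e^(i c_e).  Fundamental cycles are cycles of G, hence pairwise
  vertex disjoint, so each edge carries at most one nontrivial gain and every nonzero
  entry of A(Phi) is 1 or e^(+-i h_e), with real part >= 0.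
*)
theory Submission
  imports Defs
begin

lemma gpath_iff_successively:
  "gpath F xs \<longleftrightarrow> xs \<noteq> [] \<and> distinct xs \<and> successively (\<lambda>x y. {x, y} \<in> F) xs"
  unfolding gpath_def successively_conv_nth by blast

lemma gpath_split:
  assumes "gpath F (xs @ w # ys)"
  shows "gpath F (xs @ [w])" and "gpath F (w # ys)"
  using assms unfolding gpath_iff_successively
  by (auto simp: successively_append_iff successively_Cons)

lemma gpath_mono: "gpath F xs \<Longrightarrow> F \<subseteq> F' \<Longrightarrow> gpath F' xs"
  unfolding gpath_def by blast

lemma gpath_hd_eq_last: "gpath F xs \<Longrightarrow> hd xs = last xs \<Longrightarrow> xs = [hd xs]"
  by (cases xs) (auto simp: gpath_def split: if_splits)

lemma gpath_set_subset:
  assumes "gpath F xs" and "hd xs \<in> V" and "\<forall>e\<in>F. e \<subseteq> V"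
  shows "set xs \<subseteq> V"
proof
  fix x assume "x \<in> set xs"
  then obtain i where i: "i < length xs" "x = xs ! i" by (auto simp: in_set_conv_nth)
  show "x \<in> V"
  proof (cases i)
    case 0
    then show ?thesis using i assms by (simp add: hd_conv_nth)
  next
    case (Suc j)
    then have "{xs ! j, xs ! i} \<in> F" using assms(1) i unfolding gpath_def by auto
    then show ?thesis using assms(3) i by auto
  qed
qed

lemma internally_disjoint_paths_cycle:
  assumes xs: "gpath F xs" and ys: "gpath F ys" and "xs \<noteq> ys"
    and hd: "hd ys = hd xs" and last: "last ys = last xs" and ends: "hd xs \<noteq> last xs"
    and meet: "set xs \<inter> set ys \<subseteq> {hd xs, last xs}"
  shows "is_cycle (set xs \<union> set ys) F (xs @ rev (butlast (tl ys)))"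
proof -
  define a b mid where "a = hd xs" and "b = last xs" and "mid = butlast (tl ys)"
  have "ys \<noteq> []" using ys by (simp add: gpath_def)
  then have ys_eq: "ys = a # mid @ [b]"
    using hd last ends unfolding a_def b_def mid_def
    by (cases ys) (auto split: if_splits, metis append_butlast_last_id)
  have xs_ne: "xs \<noteq> []" and "hd xs = a" and "last xs = b"
    using xs by (simp_all add: gpath_def a_def b_def)
  have "distinct (a # mid @ [b])" using ys ys_eq by (simp add: gpath_def)
  moreover have "x \<notin> set xs" if "x \<in> set mid" for x
    using that meet \<open>distinct (a # mid @ [b])\<close> ys_eq unfolding a_def b_def by auto
  ultimately have "distinct (xs @ rev mid)" using xs by (auto simp: gpath_def)
  moreover have "successively (\<lambda>x y. {x, y} \<in> F) (xs @ rev mid)"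
    using xs ys ys_eq \<open>last xs = b\<close>
    by (auto simp: gpath_iff_successively successively_append_iff successively_Cons
        hd_rev last_rev insert_commute)
  moreover have "{last (xs @ rev mid), hd (xs @ rev mid)} \<in> F"
    using ys ys_eq xs_ne \<open>hd xs = a\<close> \<open>last xs = b\<close>
    by (cases mid) (auto simp: gpath_iff_successively successively_Cons insert_commute last_rev)
  moreover have "3 \<le> length (xs @ rev mid)"
  proof -
    have "2 \<le> length xs" using xs_ne ends by (cases xs rule: remdups_adj.cases) auto
    moreover have "length xs \<noteq> 2 \<or> mid \<noteq> []"
    proof (rule disjCI)
      assume "\<not> mid \<noteq> []"
      then have "xs \<noteq> [a, b]" using \<open>xs \<noteq> ys\<close> ys_eq by simp
      then show "length xs \<noteq> 2" using \<open>hd xs = a\<close> \<open>last xs = b\<close>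
        by (auto simp: length_Suc_conv numeral_2_eq_2)
    qed
    ultimately show ?thesis by (cases mid) auto
  qed
  moreover have "set (xs @ rev mid) \<subseteq> set xs \<union> set ys" using ys_eq by auto
  ultimately show ?thesis using xs_ne by (simp add: is_cycle_def gpath_iff_successively flip: mid_def)
qed

lemma acyclic_gpath_unique:
  assumes acyclic: "\<nexists>zs. is_cycle V F zs"
  shows "\<lbrakk>gpath F xs; gpath F ys; hd xs = hd ys; last xs = last ys; set xs \<subseteq> V; set ys \<subseteq> V\<rbrakk>
    \<Longrightarrow> xs = ys"
proof (induction "length xs + length ys" arbitrary: xs ys rule: less_induct)
  case less
  show ?case
  proof (rule ccontr)
    assume "xs \<noteq> ys"
    have "hd xs \<noteq> last xs"
    proof
      assume "hd xs = last xs"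
      then have "xs = [hd xs]" "ys = [hd xs]"
        using less.prems gpath_hd_eq_last by metis+
      with \<open>xs \<noteq> ys\<close> show False by simp
    qed
    consider w where "w \<in> set xs" "w \<in> set ys" "w \<noteq> hd xs" "w \<noteq> last xs"
      | "set xs \<inter> set ys \<subseteq> {hd xs, last xs}"
      by blast
    then show False
    proof cases
      case 1
      obtain xs1 xs2 where xs: "xs = xs1 @ w # xs2" using 1(1) split_list by metis
      obtain ys1 ys2 where ys: "ys = ys1 @ w # ys2" using 1(2) split_list by metis
      have "xs1 \<noteq> []" "ys1 \<noteq> []" "xs2 \<noteq> []" "ys2 \<noteq> []"
        using 1 less.prems xs ys by auto
      note splits = gpath_split[of F xs1 w xs2] gpath_split[of F ys1 w ys2]
      have "xs1 @ [w] = ys1 @ [w]"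
        by (rule less.hyps) (use less.prems xs ys splits \<open>xs2 \<noteq> []\<close> in \<open>auto simp: hd_append\<close>)
      moreover have "w # xs2 = w # ys2"
        by (rule less.hyps) (use less.prems xs ys splits \<open>xs1 \<noteq> []\<close> in \<open>auto simp: last_append\<close>)
      ultimately show False using \<open>xs \<noteq> ys\<close> xs ys by simp
    next
      case 2
      have "is_cycle (set xs \<union> set ys) F (xs @ rev (butlast (tl ys)))"
        using less.prems \<open>xs \<noteq> ys\<close> \<open>hd xs \<noteq> last xs\<close> 2
        by (intro internally_disjoint_paths_cycle) auto
      moreover have "set xs \<union> set ys \<subseteq> V" using less.prems(5,6) by blast
      ultimately show False using acyclic unfolding is_cycle_def by blast
    qed
  qed
qed

lemma nth_1_neq_hd_last:
  assumes "distinct xs" and "3 \<le> length xs"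
  shows "xs ! 1 \<noteq> hd xs" and "xs ! 1 \<noteq> last xs"
proof -
  have l: "0 < length xs" "1 < length xs" "length xs - 1 < length xs" using assms(2) by auto
  then have "xs \<noteq> []" by auto
  then show "xs ! 1 \<noteq> hd xs" "xs ! 1 \<noteq> last xs"
    using nth_eq_iff_index_eq[OF assms(1) l(2) l(1)] nth_eq_iff_index_eq[OF assms(1) l(2) l(3)] assms(2)
    by (simp_all add: hd_conv_nth last_conv_nth)
qed

lemma cycle_edges_at_hd:
  assumes "distinct xs" and "3 \<le> length xs"
  shows "{hd xs, y} \<in> cycle_edges xs \<longleftrightarrow> y = xs ! 1 \<or> y = last xs"
proof -
  have ne: "xs \<noteq> []" using assms(2) by auto
  have "{xs ! 0, y} = {xs ! i, xs ! Suc i} \<longleftrightarrow> i = 0 \<and> y = xs ! 1" if "Suc i < length xs" for i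
  proof -
    have l: "0 < length xs" "i < length xs" using that by auto
    have "xs ! 0 = xs ! i \<longleftrightarrow> i = 0" and "xs ! 0 \<noteq> xs ! Suc i"
      using nth_eq_iff_index_eq[OF assms(1) l] nth_eq_iff_index_eq[OF assms(1) l(1) that] by auto
    then show ?thesis by (auto simp: doubleton_eq_iff)
  qed
  then show ?thesis
    using ne assms(2) unfolding cycle_edges_def
    by (auto simp: hd_conv_nth last_conv_nth doubleton_eq_iff)
qed

lemma closed_walk_arcs:
  assumes "distinct xs" and "3 \<le> length xs" and "i < length xs"
  defines "ws \<equiv> xs @ [hd xs]"
  shows "(ws ! i, ws ! Suc i) \<in> {(last xs, hd xs), (hd xs, xs ! 1)} \<longleftrightarrow> i = 0 \<or> i = length xs - 1"
    and "(ws ! Suc i, ws ! i) \<notin> {(last xs, hd xs), (hd xs, xs ! 1)}"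
proof -
  let ?L = "length xs"
  have idx: "xs ! a = xs ! b \<longleftrightarrow> a = b" if "a < ?L" "b < ?L" for a b
    using nth_eq_iff_index_eq[OF assms(1) that] .
  have L: "0 < ?L" "1 < ?L" "?L - 1 < ?L" "?L - 1 \<noteq> 0" "?L - 1 \<noteq> 1" using assms(2) by auto
  then have ends: "hd xs = xs ! 0" "last xs = xs ! (?L - 1)"
    by (simp_all add: hd_conv_nth last_conv_nth)
  consider "i = ?L - 1" | "i < ?L - 1" using assms(3) by linarith
  then have "((ws ! i, ws ! Suc i) \<in> {(last xs, hd xs), (hd xs, xs ! 1)} \<longleftrightarrow> i = 0 \<or> i = ?L - 1)
    \<and> (ws ! Suc i, ws ! i) \<notin> {(last xs, hd xs), (hd xs, xs ! 1)}"
  proof cases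
    case 1
    then have "Suc i = ?L" using L by simp
    then have "ws ! i = xs ! (?L - 1)" "ws ! Suc i = xs ! 0"
      using 1 assms(3) by (simp_all add: ws_def nth_append ends)
    then show ?thesis using 1 L by (simp add: ends idx)
  next
    case 2
    then have "ws ! i = xs ! i" "ws ! Suc i = xs ! Suc i"
      by (auto simp: ws_def nth_append)
    then show ?thesis using 2 L by (simp add: ends idx)
  qed
  then show "(ws ! i, ws ! Suc i) \<in> {(last xs, hd xs), (hd xs, xs ! 1)} \<longleftrightarrow> i = 0 \<or> i = ?L - 1"
    and "(ws ! Suc i, ws ! i) \<notin> {(last xs, hd xs), (hd xs, xs ! 1)}"
    by blast+
qed

definition fund_path :: "'a set set \<Rightarrow> 'a \<Rightarrow> 'a set \<Rightarrow> 'a \<Rightarrow> 'a \<Rightarrow> 'a list \<Rightarrow> bool" where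
  "fund_path T r e s t xs \<longleftrightarrow>
     e = {s, t} \<and> tree_le T r s t \<and> gpath T xs \<and> hd xs = s \<and> last xs = t"

lemma fund_dir_cycle_iff:
  "fund_dir_cycle T r e ws \<longleftrightarrow> (\<exists>s t xs. fund_path T r e s t xs \<and> ws = xs @ [s])"
  unfolding fund_dir_cycle_def fund_path_def by blast

(* The arcs t -> s and s -> x_1 of the fundamental cycle of e, collected over all tree paths
   so that no path has to be chosen; for vertex-disjoint cycles these are just two arcs. *)
definition marked_arcs :: "'a set set \<Rightarrow> 'a \<Rightarrow> 'a set \<Rightarrow> ('a \<times> 'a) set" where
  "marked_arcs T r e =
     {(t, s) | s t xs. fund_path T r e s t xs} \<union> {(s, xs ! 1) | s t xs. fund_path T r e s t xs}"

definition half_angle :: "real \<Rightarrow> real" where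
  "half_angle x = (if x \<le> pi then x / 2 else x / 2 - pi)"

lemma cis_double_half_angle: "cis (2 * half_angle x) = cis x"
proof (cases "x \<le> pi")
  case False
  then have "2 * half_angle x = x - 2 * pi" by (simp add: half_angle_def)
  then show ?thesis by (simp flip: cis_divide)
qed (simp add: half_angle_def)

lemma abs_half_angle_le: "0 \<le> x \<Longrightarrow> x \<le> 2 * pi \<Longrightarrow> \<bar>half_angle x\<bar> \<le> pi / 2"
  unfolding half_angle_def by auto

definition fund_angle :: "'a set set \<Rightarrow> 'a \<Rightarrow> ('a set \<Rightarrow> real) \<Rightarrow> 'a set \<Rightarrow> 'a \<Rightarrow> 'a \<Rightarrow> real" where
  "fund_angle T r c e u v = half_angle (c e) *
     (of_bool ((u, v) \<in> marked_arcs T r e) - of_bool ((v, u) \<in> marked_arcs T r e))"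

definition arc_angle :: "'a set set \<Rightarrow> 'a set set \<Rightarrow> 'a \<Rightarrow> ('a set \<Rightarrow> real) \<Rightarrow> 'a \<Rightarrow> 'a \<Rightarrow> real" where
  "arc_angle E T r c u v = (\<Sum>e\<in>E - T. fund_angle T r c e u v)"

lemma arc_angle_swap: "arc_angle E T r c v u = - arc_angle E T r c u v"
  unfolding arc_angle_def fund_angle_def by (simp add: sum_negf[symmetric] algebra_simps)

lemma abs_fund_angle_le:
  "0 \<le> c e \<Longrightarrow> c e \<le> 2 * pi \<Longrightarrow> \<bar>fund_angle T r c e u v\<bar> \<le> pi / 2"
  using abs_half_angle_le[of "c e"] unfolding fund_angle_def by (auto simp: abs_mult)

lemma prod_cis: "finite A \<Longrightarrow> (\<Prod>i\<in>A. cis (f i)) = cis (\<Sum>i\<in>A. f i)"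
  by (induction A rule: finite_induct) (auto simp: cis_mult)

lemma sum_if_first_or_last:
  assumes "2 \<le> (L :: nat)"
  shows "(\<Sum>i<L. if i = 0 \<or> i = L - 1 then h else 0) = 2 * (h :: real)"
proof -
  have "(\<Sum>i<L. if i = 0 \<or> i = L - 1 then h else 0)
      = (\<Sum>i\<in>{0, L - 1}. if i = 0 \<or> i = L - 1 then h else 0)"
    using assms by (intro sum.mono_neutral_right) auto
  also have "\<dots> = 2 * h" using assms by simp
  finally show ?thesis .
qed

locale graph_spanning_tree =
  fixes V :: "'a set" and E T :: "'a set set" and r :: 'a
  assumes simple: "simple_graph V E"
    and spanning_tree: "rooted_spanning_tree V E T r"
begin

lemma tree_subset: "T \<subseteq> E" and root_in_V: "r \<in> V" and tree_acyclic: "\<nexists>xs. is_cycle V T xs"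
  using spanning_tree unfolding rooted_spanning_tree_def by auto

lemma edge_doubleton: "e \<in> E \<Longrightarrow> \<exists>u v. u \<noteq> v \<and> u \<in> V \<and> v \<in> V \<and> e = {u, v}"
  using simple unfolding simple_graph_def by auto

lemma tree_edges_subset: "\<forall>e\<in>T. e \<subseteq> V"
  using edge_doubleton tree_subset by blast

lemma finite_edges: "finite E"
proof (rule finite_subset)
  show "E \<subseteq> Pow V" using edge_doubleton by blast
  show "finite (Pow V)" using simple by (simp add: simple_graph_def)
qed

lemma tree_le_antisym:
  assumes "tree_le T r s t" and "tree_le T r t s"
  shows "s = t"
proof -
  obtain p where p: "gpath T p" "hd p = r" "last p = t" "s \<in> set p"
    using assms(1) unfolding tree_le_def by auto
  obtain q where q: "gpath T q" "hd q = r" "last q = s" "t \<in> set q"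
    using assms(2) unfolding tree_le_def by auto
  obtain A B where AB: "p = A @ s # B" using p(4) split_list by metis
  have prefix: "gpath T (A @ [s])" using gpath_split(1) p(1) AB by metis
  have "hd (A @ [s]) = r" using p(2) AB by (cases A) auto
  then have "A @ [s] = q"
    using acyclic_gpath_unique[OF tree_acyclic prefix q(1)] q root_in_V
      gpath_set_subset[OF prefix _ tree_edges_subset] gpath_set_subset[OF q(1) _ tree_edges_subset]
    by auto
  moreover have "t \<notin> set A"
  proof
    assume "t \<in> set A"
    moreover have "t \<in> set (s # B)" using p(3) AB by (metis last_appendR last_in_set list.distinct(1))
    ultimately show False using p(1) AB unfolding gpath_def by auto
  qed
  ultimately show ?thesis using q(4) by auto
qed

context
  fixes e s t xs
  assumes non_tree: "e \<in> E - T" and fund: "fund_path T r e s t xs"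
begin

lemma fund_path_gpath: "gpath T xs" and fund_path_hd: "hd xs = s" and fund_path_last: "last xs = t"
  and fund_path_edge: "e = {s, t}"
  using fund unfolding fund_path_def by auto

lemma fund_path_distinct: "distinct xs"
  using fund_path_gpath by (simp add: gpath_def)

lemma fund_path_ends: "s \<noteq> t" "s \<in> V"
  using edge_doubleton[of e] non_tree fund_path_edge by (auto simp: doubleton_eq_iff)

lemma fund_path_length: "3 \<le> length xs"
proof -
  have "xs \<noteq> []" using fund_path_gpath by (simp add: gpath_def)
  moreover have "length xs \<noteq> 1"
    using fund_path_hd fund_path_last fund_path_ends by (auto simp: length_Suc_conv)
  moreover have "length xs \<noteq> 2"
  proof
    assume "length xs = 2"
    then have "xs = [s, t]" using fund_path_hd fund_path_last by (auto simp: length_Suc_conv numeral_2_eq_2)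
    then have "e \<in> T" using fund_path_gpath fund_path_edge by (auto simp: gpath_def)
    with non_tree show False by simp
  qed
  ultimately show ?thesis by (cases "length xs") (auto simp: numeral_3_eq_3)
qed

lemma fund_path_is_cycle: "is_cycle V E xs"
proof -
  have "set xs \<subseteq> V"
    using gpath_set_subset[OF fund_path_gpath _ tree_edges_subset] fund_path_hd fund_path_ends by simp
  moreover have "{last xs, hd xs} \<in> E"
    using non_tree fund_path_edge fund_path_hd fund_path_last by (auto simp: insert_commute)
  ultimately show ?thesis
    using fund_path_length gpath_mono[OF fund_path_gpath tree_subset] by (simp add: is_cycle_def)
qed

lemma fund_path_vertices: "{s, t, xs ! 1} \<subseteq> set xs"
proof -
  have "xs \<noteq> []" "1 < length xs" using fund_path_length by auto
  then show ?thesis using fund_path_hd fund_path_last by auto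
qed

lemma fund_path_cycle_edges: "cycle_edges xs \<subseteq> T \<union> {e}" "e \<in> cycle_edges xs"
proof -
  have "{xs ! i, xs ! Suc i} \<in> T" if "Suc i < length xs" for i
    using fund_path_gpath that by (simp add: gpath_def)
  moreover have "{last xs, hd xs} = e"
    using fund_path_edge fund_path_hd fund_path_last by auto
  ultimately show "cycle_edges xs \<subseteq> T \<union> {e}" "e \<in> cycle_edges xs"
    unfolding cycle_edges_def by auto
qed

end

lemma fund_angle_nonzero:
  assumes "e \<in> E - T" and "fund_angle T r c e u v \<noteq> 0"
  shows "\<exists>s t xs. fund_path T r e s t xs \<and> u \<in> set xs"
proof -
  have "(u, v) \<in> marked_arcs T r e \<or> (v, u) \<in> marked_arcs T r e"
    using assms(2) unfolding fund_angle_def by auto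
  then obtain s t xs where p: "fund_path T r e s t xs" and "u \<in> {s, t, xs ! 1}"
    unfolding marked_arcs_def by blast
  moreover note fund_path_vertices[OF assms(1) p]
  ultimately show ?thesis by blast
qed

end

locale disjoint_cycles_spanning_tree = graph_spanning_tree +
  assumes disjoint_cycles: "cycles_vertex_disjoint V E"
begin

lemma fund_paths_disjoint:
  assumes "e \<in> E - T" and "fund_path T r e s t xs"
    and "e' \<in> E - T" and "fund_path T r e' s' t' xs'" and "e \<noteq> e'"
  shows "set xs \<inter> set xs' = {}"
proof -
  have "e' \<notin> cycle_edges xs" using fund_path_cycle_edges(1)[OF assms(1,2)] assms(3,5) by auto
  then have "cycle_edges xs \<noteq> cycle_edges xs'" using fund_path_cycle_edges(2)[OF assms(3,4)] by auto
  then show ?thesis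
    using disjoint_cycles fund_path_is_cycle[OF assms(1,2)] fund_path_is_cycle[OF assms(3,4)]
    unfolding cycles_vertex_disjoint_def by blast
qed

lemma fund_path_unique:
  assumes e: "e \<in> E - T" and p: "fund_path T r e s t xs" and p': "fund_path T r e s' t' xs'"
  shows "s' = s" and "t' = t" and "xs' ! 1 = xs ! 1"
proof -
  have "{s', t'} = {s, t}" using fund_path_edge[OF e p] fund_path_edge[OF e p'] by simp
  moreover have "\<not> (s' = t \<and> t' = s)"
    using tree_le_antisym p p' fund_path_ends(1)[OF e p] by (auto simp: fund_path_def)
  ultimately show ends: "s' = s" "t' = t" by (auto simp: doubleton_eq_iff)
  have "s \<in> set xs" "s \<in> set xs'"
    using fund_path_vertices[OF e p] fund_path_vertices[OF e p'] ends by auto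
  then have "cycle_edges xs' = cycle_edges xs"
    using disjoint_cycles fund_path_is_cycle[OF e p] fund_path_is_cycle[OF e p']
    unfolding cycles_vertex_disjoint_def by blast
  moreover have "{s, xs' ! 1} \<in> cycle_edges xs'"
    using cycle_edges_at_hd[OF fund_path_distinct[OF e p'] fund_path_length[OF e p']]
      fund_path_hd[OF e p'] ends by simp
  ultimately have "xs' ! 1 = xs ! 1 \<or> xs' ! 1 = t"
    using cycle_edges_at_hd[OF fund_path_distinct[OF e p] fund_path_length[OF e p]]
      fund_path_hd[OF e p] fund_path_last[OF e p] by simp
  moreover have "xs' ! 1 \<noteq> t"
    using nth_1_neq_hd_last(2)[OF fund_path_distinct[OF e p'] fund_path_length[OF e p']]
      fund_path_last[OF e p'] ends by simp
  ultimately show "xs' ! 1 = xs ! 1" by blast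
qed

lemma marked_arcs_eq:
  assumes "e \<in> E - T" and "fund_path T r e s t xs"
  shows "marked_arcs T r e = {(t, s), (s, xs ! 1)}"
  using assms fund_path_unique[OF assms] unfolding marked_arcs_def by blast

lemma arc_angle_eq_fund_angle:
  assumes e: "e \<in> E - T" and p: "fund_path T r e s t xs" and u: "u \<in> set xs"
  shows "arc_angle E T r c u v = fund_angle T r c e u v"
proof -
  have "(\<Sum>e'\<in>E - T - {e}. fund_angle T r c e' u v) = 0"
  proof (rule sum.neutral, rule ballI, rule ccontr)
    fix e' assume e': "e' \<in> E - T - {e}" and "fund_angle T r c e' u v \<noteq> 0"
    then obtain s' t' xs' where "fund_path T r e' s' t' xs'" "u \<in> set xs'"
      using fund_angle_nonzero by blast
    then show False using fund_paths_disjoint[OF e p] e' u by blast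
  qed
  moreover have "arc_angle E T r c u v
      = fund_angle T r c e u v + (\<Sum>e'\<in>E - T - {e}. fund_angle T r c e' u v)"
    unfolding arc_angle_def using finite_edges e by (simp add: sum.remove)
  ultimately show ?thesis by simp
qed

lemma abs_arc_angle_le:
  assumes c: "\<forall>e\<in>E - T. 0 \<le> c e \<and> c e < 2 * pi"
  shows "\<bar>arc_angle E T r c u v\<bar> \<le> pi / 2"
proof (cases "\<exists>e\<in>E - T. \<exists>s t xs. fund_path T r e s t xs \<and> u \<in> set xs")
  case True
  then obtain e s t xs where e: "e \<in> E - T" and "fund_path T r e s t xs" "u \<in> set xs" by blast
  then have "arc_angle E T r c u v = fund_angle T r c e u v" by (rule arc_angle_eq_fund_angle)
  moreover have "0 \<le> c e" and "c e \<le> 2 * pi" using c e by (auto intro: less_imp_le)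
  ultimately show ?thesis using abs_fund_angle_le by simp
next
  case False
  have "arc_angle E T r c u v = 0"
    unfolding arc_angle_def
  proof (rule sum.neutral, rule ballI, rule ccontr)
    fix e assume "e \<in> E - T" and "fund_angle T r c e u v \<noteq> 0"
    then show False using fund_angle_nonzero False by blast
  qed
  then show ?thesis by simp
qed

lemma arc_angle_along_fund_walk:
  assumes e: "e \<in> E - T" and p: "fund_path T r e s t xs" and i: "i < length xs"
  shows "arc_angle E T r c ((xs @ [s]) ! i) ((xs @ [s]) ! Suc i)
    = (if i = 0 \<or> i = length xs - 1 then half_angle (c e) else 0)"
proof -
  define u v where "u = (xs @ [s]) ! i" and "v = (xs @ [s]) ! Suc i"
  have "(u, v) \<in> marked_arcs T r e \<longleftrightarrow> i = 0 \<or> i = length xs - 1"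
    and "(v, u) \<notin> marked_arcs T r e"
    unfolding u_def v_def marked_arcs_eq[OF e p]
      fund_path_hd[OF e p, symmetric] fund_path_last[OF e p, symmetric]
    by (rule closed_walk_arcs[OF fund_path_distinct[OF e p] fund_path_length[OF e p] i])+
  moreover have "u \<in> set xs" using i by (simp add: u_def nth_append)
  ultimately show ?thesis
    unfolding u_def[symmetric] v_def[symmetric] arc_angle_eq_fund_angle[OF e p \<open>u \<in> set xs\<close>]
    by (simp add: fund_angle_def)
qed

lemma walk_gain_fund_dir_cycle:
  assumes e: "e \<in> E - T" and "fund_dir_cycle T r e ws"
  shows "walk_gain (\<lambda>u v. cis (arc_angle E T r c u v)) ws = cis (c e)"
proof -
  obtain s t xs where p: "fund_path T r e s t xs" and ws: "ws = xs @ [s]"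
    using assms(2) unfolding fund_dir_cycle_iff by blast
  have "walk_gain (\<lambda>u v. cis (arc_angle E T r c u v)) ws
      = cis (\<Sum>i<length xs. arc_angle E T r c (ws ! i) (ws ! Suc i))"
    unfolding walk_gain_def ws by (simp add: prod_cis)
  also have "(\<Sum>i<length xs. arc_angle E T r c (ws ! i) (ws ! Suc i))
      = (\<Sum>i<length xs. if i = 0 \<or> i = length xs - 1 then half_angle (c e) else 0)"
    unfolding ws by (intro sum.cong refl arc_angle_along_fund_walk[OF e p]) simp
  also have "\<dots> = 2 * half_angle (c e)"
    using fund_path_length[OF e p] by (intro sum_if_first_or_last) simp
  finally show ?thesis by (simp add: cis_double_half_angle)
qed

lemma gnrp_of_disjoint_cycles: "gnrp V E T r"
  unfolding gnrp_def
proof (intro allI impI)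
  fix c :: "'a set \<Rightarrow> real"
  assume c: "\<forall>e\<in>E - T. 0 \<le> c e \<and> c e < 2 * pi"
  let ?\<phi> = "\<lambda>u v. cis (arc_angle E T r c u v)"
  have "?\<phi> t s = inverse (?\<phi> s t)" for s t
    using arc_angle_swap[of E T r c t s] by simp
  then have "is_T_gain E ?\<phi>" by (simp add: is_T_gain_def)
  moreover have "Re (gain_adj E ?\<phi> u v) \<ge> 0" for u v
    using abs_arc_angle_le[OF c, of u v] by (simp add: gain_adj_def cos_ge_zero)
  ultimately show "\<exists>\<phi>. is_T_gain E \<phi> \<and>
      (\<forall>e\<in>E - T. \<forall>ws. fund_dir_cycle T r e ws \<longrightarrow> walk_gain \<phi> ws = cis (c e)) \<and>
      (\<forall>s\<in>V. \<forall>t\<in>V. Re (gain_adj E \<phi> s t) \<ge> 0)"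
    using walk_gain_fund_dir_cycle by blast
qed

end

theorem theorem4p1:
  fixes V :: "'a set" and E :: "'a set set" and n :: nat
  assumes "simple_graph V E"
    and "card V = n"
    and "connected_graph V E"
    and "cycles_vertex_disjoint V E"
  shows "in_P n V E"
  unfolding in_P_def
proof (intro conjI allI impI)
  fix T r
  assume "normal_spanning_tree V E T r"
  then interpret disjoint_cycles_spanning_tree V E T r
    using assms by unfold_locales (auto simp: normal_spanning_tree_def)
  show "gnrp V E T r" by (rule gnrp_of_disjoint_cycles)
qed (use assms in auto)

end
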